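(* Let $f\in\mathcal{H}^+$ satisfy the short trip property with respect to an open, simply connected neighbourhood $V$ of $0$, and assume $f$ is not locally topologically conjugate to $z\mapsto\frac12 z$ nor to $z\mapsto 2z$. Then every connected component of $W^s(V)\cap W^u(V)\setminus\{0\}$ is open and simply connected; in particular each such component is homeomorphic to the plane.
   Context: $\mathcal{H}^+$ is the set of orientation preserving homeomorphisms of the plane $\mathbb{R}^2\cong\mathbb{C}$ fixing $0$. $f$ has the short trip property with respect to a neighbourhood $V$ of $0$ if for every neighbourhood $W$ of $0$ there is an integer $N_W>0$ such that every segment of orbit $(x,f(x),\dots,f^n(x))$ contained in $V$ with $x\notin W$ and $f^n(x)\notin W$ satisfies $n<N_W$. $W^s(V)=\bigcap_{n\ge0}f^{-n}(V)$, $W^u(V)=\bigcap_{n\le0}f^{-n}(V)$. Local topological conjugacy of $f_1,f_2\in\mathcal{H}^+$ means $f_2=\varphi f_1\varphi^{-1}$ on a neighbourhood of $0$ for some $\varphi\in\mathcal{H}^+$. *)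

theory Defs
  imports "HOL-Complex_Analysis.Complex_Analysis"
begin

definition orientation_preserving :: "(complex \<Rightarrow> complex) \<Rightarrow> bool" where
  "orientation_preserving f \<longleftrightarrow>
     (\<forall>z r. r > 0 \<longrightarrow> winding_number (f \<circ> circlepath z r) (f z) = 1)"

definition H_plus :: "(complex \<Rightarrow> complex) set" where
  "H_plus = {f. (\<exists>g. homeomorphism UNIV UNIV f g) \<and> f 0 = 0 \<and> orientation_preserving f}"

definition short_trip :: "(complex \<Rightarrow> complex) \<Rightarrow> complex set \<Rightarrow> bool" where
  "short_trip f V \<longleftrightarrow>
     (\<forall>W. open W \<and> 0 \<in> W \<longrightarrow>
        (\<exists>N::nat. N > 0 \<and>
           (\<forall>x n. (\<forall>k\<le>n. (f ^^ k) x \<in> V) \<and> x \<notin> W \<and> (f ^^ n) x \<notin> W \<longrightarrow> n < N)))"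

definition Ws :: "(complex \<Rightarrow> complex) \<Rightarrow> complex set \<Rightarrow> complex set" where
  "Ws f V = (\<Inter>n. (f ^^ n) -` V)"

definition Wu :: "(complex \<Rightarrow> complex) \<Rightarrow> complex set \<Rightarrow> complex set" where
  "Wu f V = (\<Inter>n. (inv f ^^ n) -` V)"

definition loc_top_conj :: "(complex \<Rightarrow> complex) \<Rightarrow> (complex \<Rightarrow> complex) \<Rightarrow> bool" where
  "loc_top_conj f1 f2 \<longleftrightarrow>
     (\<exists>\<phi>\<in>H_plus. \<exists>U. open U \<and> 0 \<in> U \<and> (\<forall>z\<in>U. f2 z = \<phi> (f1 (inv \<phi> z))))"

end

theory Submission
  imports Defs
begin

text \<open>
  Write \<open>g\<close> for the inverse of \<open>f\<close>; then \<open>W\<^sup>u(V)\<close> is the stable set of \<open>g\<close>, and \<open>g\<close> has the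
  short trip property too. A point of \<open>W\<^sup>s(V) \<inter> W\<^sup>u(V)\<close> away from \<open>0\<close> has a neighbourhood whose
  orbits stay in \<open>V\<close> for \<open>N\<close> steps and avoid a small ball \<open>B\<close> around \<open>0\<close>; by the short trip property
  an orbit segment that leaves \<open>V\<close> later must pass through \<open>B\<close> first, but \<open>f(B) \<subseteq> V\<close>. So
  \<open>S = W\<^sup>s(V) \<inter> W\<^sup>u(V) - {0}\<close> is open.

  For simple connectivity of a component \<open>C\<close> of \<open>S\<close> it suffices that \<open>inside K \<subseteq> C\<close> for compact
  \<open>K \<subseteq> C\<close>. Since \<open>V\<close> is simply connected and the iterates are homeomorphisms, \<open>inside K\<close> lies
  in both stable sets. If \<open>0\<close> were inside \<open>K\<close>, then for large \<open>N\<close> the short trip property would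
  push \<open>K\<close>, hence \<open>inside K\<close>, by both \<open>f\<^sup>N\<close> and \<open>g\<^sup>N\<close> into a ball much smaller than \<open>inside K\<close>,
  which is absurd since \<open>f\<^sup>N \<circ> g\<^sup>N = id\<close>. Otherwise the closure of the component of \<open>-K\<close> containing a
  point of \<open>inside K\<close> is a connected subset of \<open>S\<close> meeting \<open>C\<close> in its frontier, so it lies in \<open>C\<close>.
\<close>

lemma continuous_on_funpow:
  fixes f :: "'a::topological_space \<Rightarrow> 'a"
  assumes "continuous_on UNIV f"
  shows "continuous_on UNIV (f ^^ n)"
proof (induction n)
  case (Suc n)
  then show ?case
    using continuous_on_compose[OF Suc continuous_on_subset[OF assms]] by simp
qed simp

lemma homeomorphism_funpow:
  fixes f g :: "'a::topological_space \<Rightarrow> 'a"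
  assumes "homeomorphism UNIV UNIV f g"
  shows "homeomorphism UNIV UNIV (f ^^ n) (g ^^ n)"
proof (induction n)
  case 0
  show ?case unfolding funpow.simps(1) id_def by (rule homeomorphism_ident)
next
  case (Suc n)
  have "homeomorphism UNIV UNIV (f ^^ n \<circ> f) (g \<circ> g ^^ n)"
    by (rule homeomorphism_compose[OF assms Suc])
  then show ?case by (simp only: funpow_Suc_right[where f=f] funpow.simps(2)[of n g])
qed

lemma funpow_inverse_cancel:
  fixes f g :: "'a \<Rightarrow> 'a"
  assumes "\<And>y. f (g y) = y"
  shows "(f ^^ n) ((g ^^ n) y) = y"
proof (induction n)
  case (Suc n)
  have "(f ^^ Suc n) ((g ^^ Suc n) y) = (f ^^ n) (f (g ((g ^^ n) y)))"
    by (simp only: funpow.simps(2) comp_apply funpow_swap1)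
  then show ?case by (simp add: Suc.IH assms)
qed simp

lemma homeomorphism_image_inside_subset:
  fixes h :: "'a::euclidean_space \<Rightarrow> 'a"
  assumes hom: "homeomorphism UNIV UNIV h k"
  shows "h ` inside K \<subseteq> inside (h ` K)"
proof
  fix w assume "w \<in> h ` inside K"
  then obtain z where z: "z \<in> inside K" and w: "w = h z" by blast
  have hk: "\<And>x. k (h x) = x" "\<And>y. h (k y) = y"
    and ch: "continuous_on UNIV h" and ck: "continuous_on UNIV k"
    using hom by (auto simp: homeomorphism_def)
  define Q where "Q = connected_component_set (- K) z"
  define T where "T = connected_component_set (- (h ` K)) w"
  have wK: "w \<notin> h ` K"
    using z hk w by (metis image_iff inside_no_overlap disjoint_iff)
  have "k ` T \<subseteq> Q"
    unfolding Q_def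
  proof (rule connected_component_maximal)
    have "w \<in> T" using wK by (simp add: T_def)
    then show "z \<in> k ` T" using hk(1) w by (metis image_eqI)
    show "connected (k ` T)"
      unfolding T_def by (rule connected_continuous_image[OF continuous_on_subset[OF ck]]) auto
    show "k ` T \<subseteq> - K"
    proof
      fix y assume "y \<in> k ` T"
      then obtain t where "t \<in> T" "y = k t" by blast
      then have "h y \<notin> h ` K" using hk(2) connected_component_in by (fastforce simp: T_def)
      then show "y \<in> - K" by blast
    qed
  qed
  have "T \<subseteq> h ` Q"
  proof
    fix t assume "t \<in> T"
    then have "k t \<in> Q" using \<open>k ` T \<subseteq> Q\<close> by blast
    then show "t \<in> h ` Q" using hk(2)[of t] by (metis image_eqI)
  qed
  then have "T \<subseteq> h ` closure Q"
    using closure_subset by blast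
  moreover have "bounded (h ` closure Q)"
    using z by (intro compact_imp_bounded compact_continuous_image continuous_on_subset[OF ch])
      (auto simp: inside_def Q_def)
  ultimately show "w \<in> inside (h ` K)"
    using wK bounded_subset by (auto simp: inside_def T_def)
qed

lemma homeomorphism_image_inside_subset_simply_connected:
  fixes h :: "complex \<Rightarrow> complex"
  assumes "homeomorphism UNIV UNIV h k" "open U" "simply_connected U" "h ` K \<subseteq> U"
  shows "h ` inside K \<subseteq> U"
  using homeomorphism_image_inside_subset[OF assms(1)]
    subset_simply_connected_imp_inside_subset[OF assms(3,2,4)] by blast

lemma simply_connected_if_inside_subset:
  fixes C :: "complex set"
  assumes "open C" "connected C" and inside: "\<And>K. compact K \<Longrightarrow> K \<subseteq> C \<Longrightarrow> inside K \<subseteq> C"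
  shows "simply_connected C"
  unfolding simply_connected_eq_winding_number_zero[OF \<open>open C\<close>]
proof (intro conjI allI impI \<open>connected C\<close>)
  fix \<gamma> z
  assume \<gamma>: "path \<gamma> \<and> path_image \<gamma> \<subseteq> C \<and> pathfinish \<gamma> = pathstart \<gamma> \<and> z \<notin> C"
  then have "z \<notin> inside (path_image \<gamma>) \<union> path_image \<gamma>"
    using inside[of "path_image \<gamma>"] compact_path_image by blast
  then have "z \<in> outside (path_image \<gamma>)"
    using inside_Un_outside by blast
  then show "winding_number \<gamma> z = 0"
    using \<gamma> winding_number_zero_in_outside by blast
qed

lemma component_contains_Compl_component:
  fixes K :: "'a::real_normed_vector set"
  assumes C: "C \<in> components S" and K: "closed K" "K \<noteq> {}" "K \<subseteq> C"
    and z: "z \<notin> K" and QS: "connected_component_set (- K) z \<subseteq> S"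
  shows "z \<in> C"
proof -
  define Q where "Q = connected_component_set (- K) z"
  have "z \<in> Q" using z by (simp add: Q_def)
  moreover have "Q \<noteq> UNIV"
    using K connected_component_subset[of "- K" z] by (auto simp: Q_def)
  ultimately obtain w where w: "w \<in> frontier Q"
    using frontier_not_empty by blast
  have "frontier Q \<subseteq> K"
    using frontier_of_connected_component_subset[of "- K" z] frontier_subset_closed[OF K(1)]
    by (simp add: Q_def frontier_complement)
  moreover have "C \<subseteq> S"
    using C in_components_subset by blast
  ultimately have "closure Q \<subseteq> S" and "w \<in> C \<inter> closure Q"
    using QS K(3) w closure_Un_frontier[of Q] by (auto simp: Q_def)
  then have "closure Q \<subseteq> C"
    using components_maximal[OF C] connected_connected_component connected_imp_connected_closure
    by (metis Q_def empty_iff)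
  then show "z \<in> C"
    using \<open>z \<in> Q\<close> closure_subset by blast
qed

lemma short_trip_inverse:
  fixes f g :: "complex \<Rightarrow> complex"
  assumes inverse: "\<And>y. f (g y) = y" and st: "short_trip f V"
  shows "short_trip g V"
  unfolding short_trip_def
proof (intro allI impI)
  fix W :: "complex set" assume "open W \<and> 0 \<in> W"
  then obtain N :: nat where "N > 0" and N:
    "\<And>x n. (\<forall>k\<le>n. (f ^^ k) x \<in> V) \<and> x \<notin> W \<and> (f ^^ n) x \<notin> W \<Longrightarrow> n < N"
    using st unfolding short_trip_def by blast
  have "n < N" if orbit: "\<forall>k\<le>n. (g ^^ k) x \<in> V" and "x \<notin> W" "(g ^^ n) x \<notin> W" for x n
  proof -
    have "(f ^^ k) ((g ^^ n) x) = (g ^^ (n - k)) x" if "k \<le> n" for k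
      using funpow_inverse_cancel[of f g, OF inverse, of k] that
      by (metis funpow_add le_add_diff_inverse o_apply)
    then have "\<forall>k\<le>n. (f ^^ k) ((g ^^ n) x) \<in> V"
      using orbit by simp
    then show "n < N"
      using N[of n "(g ^^ n) x"] that funpow_inverse_cancel[of f g, OF inverse] by simp
  qed
  with \<open>N > 0\<close> show "\<exists>N>0. \<forall>x n. (\<forall>k\<le>n. (g ^^ k) x \<in> V) \<and> x \<notin> W \<and> (g ^^ n) x \<notin> W \<longrightarrow> n < N"
    by blast
qed

lemma short_trip_orbit_stays:
  assumes "short_trip h V" "open W" "0 \<in> W" and W: "W \<subseteq> h -` V"
  obtains N where "\<And>y. y \<notin> W \<Longrightarrow> \<forall>k\<le>N. (h ^^ k) y \<in> V \<Longrightarrow> y \<in> Ws h V"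
proof -
  obtain N :: nat where N:
    "\<And>x n. (\<forall>k\<le>n. (h ^^ k) x \<in> V) \<and> x \<notin> W \<and> (h ^^ n) x \<notin> W \<Longrightarrow> n < N"
    using assms(1-3) unfolding short_trip_def by blast
  have stays: "\<forall>k\<le>n. (h ^^ k) y \<in> V" if y: "y \<notin> W" "\<forall>k\<le>N. (h ^^ k) y \<in> V" for y n
  proof (induction n)
    case (Suc n)
    have "(h ^^ Suc n) y \<in> V"
    proof (cases "(h ^^ n) y \<in> W")
      case True
      then show ?thesis using W by auto
    next
      case False
      then have "Suc n \<le> N" using N[of n y] Suc.IH y(1) by simp
      then show ?thesis using y(2) by blast
    qed
    with Suc.IH show ?case
      using le_Suc_eq by blast
  qed (use spec[OF y(2), of 0] in simp)
  show thesis
  proof (rule that)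
    fix y assume "y \<notin> W" "\<forall>k\<le>N. (h ^^ k) y \<in> V"
    then have "(h ^^ n) y \<in> V" for n
      using stays by blast
    then show "y \<in> Ws h V"
      by (simp add: Ws_def)
  qed
qed

lemma open_stable_set_Diff_fixpoint:
  assumes "continuous_on UNIV h" "h 0 = 0" "open V" "0 \<in> V" "short_trip h V"
  shows "open (Ws h V - {0})"
proof (rule open_subopen[THEN iffD2], intro ballI)
  fix x assume x: "x \<in> Ws h V - {0}"
  have "open (h -` V)" "0 \<in> h -` V"
    using assms(1-4) by (auto intro: open_vimage)
  then obtain e where "e > 0" and e: "ball 0 e \<subseteq> h -` V"
    by (meson openE)
  define d where "d = min e (norm x / 2)"
  have "d > 0" using \<open>e > 0\<close> x by (simp add: d_def)
  moreover have "ball 0 d \<subseteq> h -` V"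
    using e by (auto simp: d_def)
  ultimately obtain N where N:
    "\<And>y. y \<notin> ball 0 d \<Longrightarrow> \<forall>k\<le>N. (h ^^ k) y \<in> V \<Longrightarrow> y \<in> Ws h V"
    using short_trip_orbit_stays[OF assms(5), of "ball 0 d"] by auto
  define U where "U = - cball 0 d \<inter> (\<Inter>k\<le>N. (h ^^ k) -` V)"
  have "open (\<Inter>k\<le>N. (h ^^ k) -` V)"
    using open_vimage[OF assms(3) continuous_on_funpow[OF assms(1)]] by (auto intro: open_INT)
  then have "open U"
    by (simp add: U_def open_Int open_Compl)
  moreover have "x \<in> U"
  proof -
    have "norm x / 2 < norm x"
      using x by simp
    then have "norm x > d"
      by (simp add: d_def min_less_iff_disj)
    then show ?thesis
      using x by (auto simp: U_def Ws_def)
  qed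
  moreover have "U \<subseteq> Ws h V - {0}"
  proof
    fix y assume "y \<in> U"
    then have "y \<notin> ball 0 d" "\<forall>k\<le>N. (h ^^ k) y \<in> V" "y \<noteq> 0"
      using \<open>d > 0\<close> by (auto simp: U_def)
    then show "y \<in> Ws h V - {0}"
      using N by blast
  qed
  ultimately show "\<exists>U. open U \<and> x \<in> U \<and> U \<subseteq> Ws h V - {0}"
    by blast
qed

lemma open_stable_Int_stable_inverse_Diff_fixpoint:
  fixes f g :: "complex \<Rightarrow> complex"
  assumes hom: "homeomorphism UNIV UNIV f g" and "f 0 = 0"
    and "open V" "0 \<in> V" "short_trip f V" "short_trip g V"
  shows "open (Ws f V \<inter> Ws g V - {0})"
proof -
  have "g 0 = 0"
    using hom \<open>f 0 = 0\<close> by (metis homeomorphism_apply1 UNIV_I)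
  have "open (Ws f V - {0})" "open (Ws g V - {0})"
    using open_stable_set_Diff_fixpoint[OF _ \<open>f 0 = 0\<close> assms(3-5)]
      open_stable_set_Diff_fixpoint[OF _ \<open>g 0 = 0\<close> assms(3,4,6)]
      hom by (auto simp: homeomorphism_def)
  then have "open ((Ws f V - {0}) \<inter> (Ws g V - {0}))"
    by (rule open_Int)
  moreover have "(Ws f V - {0}) \<inter> (Ws g V - {0}) = Ws f V \<inter> Ws g V - {0}"
    by blast
  ultimately show ?thesis
    by simp
qed

lemma inside_subset_stable_set:
  fixes h :: "complex \<Rightarrow> complex"
  assumes hom: "homeomorphism UNIV UNIV h k" and "open V" "simply_connected V"
    and K: "K \<subseteq> Ws h V"
  shows "inside K \<subseteq> Ws h V"
proof -
  have "(h ^^ n) ` inside K \<subseteq> V" for n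
  proof (rule homeomorphism_image_inside_subset_simply_connected[OF homeomorphism_funpow[OF hom]])
    show "(h ^^ n) ` K \<subseteq> V" using K by (auto simp: Ws_def)
  qed fact+
  then show ?thesis
    by (auto simp: Ws_def)
qed

lemma short_trip_funpow_image_subset:
  assumes "short_trip h V" "open W" "0 \<in> W" and K: "K \<subseteq> Ws h V" "K \<inter> W = {}"
  obtains N where "\<And>n. N \<le> n \<Longrightarrow> (h ^^ n) ` K \<subseteq> W"
proof -
  obtain N :: nat where N:
    "\<And>x n. (\<forall>k\<le>n. (h ^^ k) x \<in> V) \<and> x \<notin> W \<and> (h ^^ n) x \<notin> W \<Longrightarrow> n < N"
    using assms(1-3) unfolding short_trip_def by blast
  have "(h ^^ n) ` K \<subseteq> W" if "N \<le> n" for n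
    using N[of n] K that by (fastforce simp: Ws_def)
  then show ?thesis using that by blast
qed

lemma zero_notin_interior_inside_stable_unstable:
  fixes f g :: "complex \<Rightarrow> complex"
  assumes hom: "homeomorphism UNIV UNIV f g" and "short_trip f V" "short_trip g V"
    and K: "K \<subseteq> Ws f V \<inter> Ws g V"
  shows "0 \<notin> interior (inside K)"
proof
  assume "0 \<in> interior (inside K)"
  then obtain r where "r > 0" and r: "ball 0 r \<subseteq> inside K"
    by (meson mem_interior)
  define W where "W = ball (0::complex) (r / 2)"
  have W: "open W" "0 \<in> W" "simply_connected W" "W \<subseteq> inside K"
    using \<open>r > 0\<close> r by (auto simp: W_def convex_imp_simply_connected)
  then have KW: "K \<inter> W = {}"
    using inside_no_overlap by blast
  obtain Nf where Nf: "\<And>n. Nf \<le> n \<Longrightarrow> (f ^^ n) ` K \<subseteq> W"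
    using short_trip_funpow_image_subset[OF assms(2) W(1,2) _ KW] K by blast
  obtain Ng where Ng: "\<And>n. Ng \<le> n \<Longrightarrow> (g ^^ n) ` K \<subseteq> W"
    using short_trip_funpow_image_subset[OF assms(3) W(1,2) _ KW] K by blast
  define N where "N = max Nf Ng"
  have homg: "homeomorphism UNIV UNIV g f"
    using hom homeomorphism_sym by blast
  have fW: "(f ^^ N) ` inside K \<subseteq> W"
    using homeomorphism_image_inside_subset_simply_connected[OF homeomorphism_funpow[OF hom] W(1,3)]
      Nf by (simp add: N_def)
  have gW: "(g ^^ N) ` inside K \<subseteq> W"
    using homeomorphism_image_inside_subset_simply_connected[OF homeomorphism_funpow[OF homg] W(1,3)]
      Ng by (simp add: N_def)
  define q where "q = complex_of_real (3 * r / 4)"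
  have "q \<in> inside K" "q \<notin> W"
    using \<open>r > 0\<close> r by (auto simp: q_def W_def)
  then have "(f ^^ N) ((g ^^ N) q) \<in> W"
    using fW gW W(4) by blast
  moreover have "(f ^^ N) ((g ^^ N) q) = q"
    using hom by (intro funpow_inverse_cancel) (simp add: homeomorphism_apply2)
  ultimately show False
    using \<open>q \<notin> W\<close> by simp
qed

lemma simply_connected_component_stable_unstable:
  fixes f g :: "complex \<Rightarrow> complex"
  assumes hom: "homeomorphism UNIV UNIV f g"
    and V: "open V" "simply_connected V" and st: "short_trip f V" "short_trip g V"
    and C: "C \<in> components (Ws f V \<inter> Ws g V - {0})" and "open C"
  shows "simply_connected C"
proof (rule simply_connected_if_inside_subset[OF \<open>open C\<close>])
  show "connected C"
    using C in_components_connected by blast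
  have CS: "C \<subseteq> Ws f V \<inter> Ws g V - {0}"
    using C in_components_subset by blast
  fix K assume "compact K" and KC: "K \<subseteq> C"
  show "inside K \<subseteq> C"
  proof
    fix z assume z: "z \<in> inside K"
    have "inside K \<subseteq> Ws f V \<inter> Ws g V"
      using inside_subset_stable_set[OF hom V] inside_subset_stable_set[OF homeomorphism_sym[THEN iffD1, OF hom] V]
        KC CS by blast
    define Q where "Q = connected_component_set (- K) z"
    have "Q \<subseteq> inside K"
    proof
      fix w assume "w \<in> Q"
      then have "connected_component_set (- K) w = Q" "w \<notin> K"
        unfolding Q_def using connected_component_eq connected_component_in by blast+
      moreover have "bounded Q"
        using z by (simp add: inside_def Q_def)
      ultimately show "w \<in> inside K"
        by (simp add: inside_def)
    qed
    moreover have "open Q"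
      using \<open>compact K\<close> by (simp add: Q_def open_connected_component compact_imp_closed open_Compl)
    ultimately have "0 \<notin> Q"
      using zero_notin_interior_inside_stable_unstable[OF hom st] KC CS interior_maximal
      by (metis (no_types, lifting) Diff_subset le_infI subset_iff)
    show "z \<in> C"
    proof (rule component_contains_Compl_component[OF C])
      show "closed K" "K \<subseteq> C" using \<open>compact K\<close> KC by (auto simp: compact_imp_closed)
      show "K \<noteq> {}" "z \<notin> K" using z by (auto simp: inside_def)
      show "connected_component_set (- K) z \<subseteq> Ws f V \<inter> Ws g V - {0}"
        using \<open>Q \<subseteq> inside K\<close> \<open>inside K \<subseteq> _\<close> \<open>0 \<notin> Q\<close> by (auto simp: Q_def)
    qed
  qed
qed

theorem lemma2:
  fixes f :: "complex \<Rightarrow> complex" and V :: "complex set"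
  assumes "f \<in> H_plus"
    and "open V" and "simply_connected V" and "0 \<in> V"
    and "short_trip f V"
    and "\<not> loc_top_conj f (\<lambda>z. z / 2)"
    and "\<not> loc_top_conj f (\<lambda>z. 2 * z)"
  shows "\<forall>C \<in> components ((Ws f V \<inter> Wu f V) - {0}).
           open C \<and> simply_connected C \<and> C homeomorphic (UNIV :: complex set)"
proof
  obtain g where hom: "homeomorphism UNIV UNIV f g" and "f 0 = 0"
    using assms(1) unfolding H_plus_def by blast
  have "inv f = g"
    using hom by (intro inv_equality) (auto simp: homeomorphism_def)
  then have "Wu f V = Ws g V"
    by (simp add: Wu_def Ws_def)
  have "short_trip g V"
    using short_trip_inverse[OF _ assms(5)] hom by (simp add: homeomorphism_apply2)
  have "open (Ws f V \<inter> Ws g V - {0})"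
    by (rule open_stable_Int_stable_inverse_Diff_fixpoint[OF hom \<open>f 0 = 0\<close> assms(2,4,5) \<open>short_trip g V\<close>])
  fix C assume "C \<in> components (Ws f V \<inter> Wu f V - {0})"
  then have C: "C \<in> components (Ws f V \<inter> Ws g V - {0})"
    using \<open>Wu f V = Ws g V\<close> by simp
  then have "open C"
    using open_components \<open>open (Ws f V \<inter> Ws g V - {0})\<close> by blast
  moreover have "simply_connected C"
    using simply_connected_component_stable_unstable[OF hom assms(2,3,5) \<open>short_trip g V\<close> C \<open>open C\<close>] .
  moreover have "C homeomorphic ball (0::complex) 1"
    using simply_connected_eq_homeomorphic_to_disc[OF \<open>open C\<close>] \<open>simply_connected C\<close>
      C in_components_nonempty by blast
  ultimately show "open C \<and> simply_connected C \<and> C homeomorphic (UNIV :: complex set)"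
    by (meson homeomorphic_ball_UNIV homeomorphic_trans zero_less_one)
qed

end
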